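(* Let $n,p,d$ be positive integers with $n>p$, and let $P(t)$ be the $(p-1)\times(p-1)$ matrix whose $(i,j)$ entry ($1\le i,j\le p-1$) is $\sum_{k\ge0}\binom{p-i}{k}\binom{n-1-j}{k}t^k$. Then $$\frac{\det(P(t^{d-1}))}{t^{(d-1)\binom{p-1}{2}}}\frac{(1-t^d)^p(1-t^{d-1})^{n-p}}{(1-t)^n}=\left(\sum_{k=0}^{p-1}\binom{n-p-1+k}{k}t^{k(d-1)}\right)\frac{(1-t^d)^p(1-t^{d-1})^{n-p}}{(1-t)^n}.$$ In particular, the Hilbert series $H$ of a generic determinantal ideal with parameters $(n,p,d)$ equals the right-hand side.
   Context: The left-hand side is the Hilbert series of $K[x_1,\dots,x_n]/I$ for a generic determinantal ideal $I$: the ideal generated by $p$ generic polynomials of degree $d$ in $K[x_1,\dots,x_n]$ together with the maximal minors of a $p\times(n-1)$ matrix of generic polynomials of degree $d-1$. *)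

theory Defs
  imports Complex_Main "Jordan_Normal_Form.Determinant"
begin

text \<open>The (p-1) x (p-1) matrix P(t); Isabelle indices i,j are 0-based, so
  entry (i,j) here is the paper's entry (i+1,j+1):
  sum over k of binom(p-(i+1),k) * binom(n-1-(j+1),k) * t^k.
  The sum over k >= 0 is finite since binom(p-(i+1),k) = 0 for k > p.\<close>
definition Pmat :: "nat \<Rightarrow> nat \<Rightarrow> real \<Rightarrow> real mat" where
  "Pmat n p t = mat (p - 1) (p - 1)
     (\<lambda>(i, j). \<Sum>k\<le>p. real ((p - (i + 1)) choose k) * real ((n - 1 - (j + 1)) choose k) * t ^ k)"

end

theory Submission
  imports Defs "HOL-Computational_Algebra.Formal_Power_Series"
begin

text \<open>Put m = p - 1 and q = n - p. Reversing the order of rows and columns turns P(s) into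
  A(i,j) = \<Sum>k. C(i+1,k) C(q+j,k) s^k, which factors as A = L D N T L^T. Pascal's rule
  splits off the Pascal matrix L, D = diag(s^i), and Vandermonde's identity
  C(q+j,c) = \<Sum>e. C(q,c-e) C(j,e) splits off T L^T, with T the Toeplitz matrix of (1+x)^q.
  The remaining factor N = I + s S + s e z^T (S the shift, e the last unit vector) records
  that for j < m the numbers C(q+j,l) satisfy a linear recurrence in l whose coefficients z,
  independent of j, come from (1+x)^(-q) (1+x)^(q+j) = (1+x)^j.
  L and T are unitriangular, det D = s^(m choose 2), and multiplying N by (I + s S)^(-1) leaves
  a lower triangular matrix whose only nontrivial diagonal entry is \<Sum>k\<le>m. C(q-1+k,k) s^k.\<close>

lemma binomial_linear_recurrence:
  assumes "j < m"
  shows "(\<Sum>l<m. - ((- real q) gchoose (m - l)) * real ((q + j) choose l))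
       = real ((q + j) choose m)"
proof -
  have "(\<Sum>l\<le>m. (real (q + j) gchoose l) * ((- real q) gchoose (m - l))) = real j gchoose m"
    using gbinomial_Vandermonde[of "real (q + j)" "- real q" m] by (simp add: atLeast0AtMost)
  also have "\<dots> = 0" using assms by (simp add: binomial_gbinomial[symmetric] binomial_eq_0)
  finally show ?thesis
    by (simp add: lessThan_Suc_atMost[symmetric] binomial_gbinomial sum_negf mult.commute)
qed

lemma gbinomial_minus_of_nat:
  assumes "0 < q"
  shows "(- real q) gchoose k = (-1) ^ k * real ((q - 1 + k) choose k)"
  using assms by (simp add: gbinomial_minus binomial_gbinomial of_nat_diff)

lemma neg_binomial_partial_sum:
  fixes s :: real
  assumes "0 < q"
  shows "1 + s * (\<Sum>l<m. - ((- real q) gchoose (m - l)) * (-s) ^ (m - 1 - l))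
       = (\<Sum>k\<le>m. real ((q - 1 + k) choose k) * s ^ k)"
proof -
  let ?c = "\<lambda>k. real ((q - 1 + k) choose k) * s ^ k"
  have "s * (- ((- real q) gchoose (m - l)) * (-s) ^ (m - 1 - l)) = ?c (Suc (m - Suc l))"
    if "l < m" for l
  proof -
    have "m - l = Suc (m - Suc l)" "m - 1 - l = m - Suc l" using that by simp_all
    then show ?thesis by (simp add: gbinomial_minus_of_nat[OF assms] power_minus[of s])
  qed
  then have "s * (\<Sum>l<m. - ((- real q) gchoose (m - l)) * (-s) ^ (m - 1 - l))
      = (\<Sum>l<m. ?c (Suc (m - Suc l)))"
    by (simp add: sum_distrib_left)
  also have "\<dots> = (\<Sum>k<m. ?c (Suc k))" by (rule sum.nat_diff_reindex)
  finally show ?thesis by (simp add: sum.atMost_shift)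
qed

lemma sum_binomial_Suc_eq:
  fixes f :: "nat \<Rightarrow> real"
  assumes "i < m"
  shows "(\<Sum>k\<le>Suc m. real (Suc i choose k) * f k)
       = (\<Sum>c<m. real (i choose c) * (f c + f (Suc c)))"
proof -
  have truncate: "(\<Sum>k\<le>N. real (i choose k) * g k) = (\<Sum>k<m. real (i choose k) * g k)"
    if "m \<le> Suc N" for g N
    by (rule sum.mono_neutral_right) (use assms that in \<open>auto simp: binomial_eq_0\<close>)
  have "(\<Sum>k\<le>Suc m. real (Suc i choose k) * f k)
      = (f 0 + (\<Sum>k\<le>m. real (i choose Suc k) * f (Suc k)))
        + (\<Sum>k\<le>m. real (i choose k) * f (Suc k))"
    by (simp add: sum.atMost_Suc_shift sum.distrib algebra_simps del: sum.atMost_Suc)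
  also have "f 0 + (\<Sum>k\<le>m. real (i choose Suc k) * f (Suc k))
      = (\<Sum>k\<le>Suc m. real (i choose k) * f k)"
    by (simp add: sum.atMost_Suc_shift del: sum.atMost_Suc)
  finally show ?thesis
    using truncate[of "Suc m" f] truncate[of m "\<lambda>k. f (Suc k)"]
    by (simp add: sum.distrib distrib_left del: sum.atMost_Suc)
qed

lemma det_lower_triangular_prod:
  fixes A :: "'a::comm_ring_1 mat"
  assumes "A \<in> carrier_mat n n" "\<And>i j. i < j \<Longrightarrow> j < n \<Longrightarrow> A $$ (i, j) = 0"
  shows "det A = (\<Prod>i<n. A $$ (i, i))"
  using det_lower_triangular[OF assms(2,1)] assms(1)
  by (simp add: prod_list_diag_prod atLeast0LessThan)

lemma det_mat_diag: "det (mat_diag n f) = (\<Prod>i<n. f i)"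
  by (subst det_lower_triangular_prod[of _ n]) (auto simp: mat_diag_def)

lemma permutes_reverse: "(\<lambda>i. if i < m then m - 1 - i else i) permutes {0..<m::nat}"
  by (rule bij_imp_permutes, rule bij_betw_byWitness[where f' = "\<lambda>i. m - 1 - i"])
    (force simp: image_subset_iff)+

lemma det_permute_rows_cols:
  fixes A :: "'a::comm_ring_1 mat"
  assumes A: "A \<in> carrier_mat n n" and p: "p permutes {0..<n}"
  shows "det (mat n n (\<lambda>(i, j). A $$ (p i, p j))) = det A"
proof -
  define B where "B = mat n n (\<lambda>(i, j). A $$ (p i, j))"
  define C where "C = mat n n (\<lambda>(i, j). transpose_mat B $$ (p i, j))"
  have B: "B \<in> carrier_mat n n" and C: "C \<in> carrier_mat n n" by (simp_all add: B_def C_def)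
  have "mat n n (\<lambda>(i, j). A $$ (p i, p j)) = transpose_mat C"
    using p by (auto simp: B_def C_def permutes_in_image)
  then have "det (mat n n (\<lambda>(i, j). A $$ (p i, p j))) = signof p * det (transpose_mat B)"
    using det_permute_rows[of "transpose_mat B" n p] det_transpose[OF C] B p by (simp add: C_def)
  also have "\<dots> = signof p * signof p * det A"
    using det_permute_rows[OF A p] det_transpose[OF B] by (simp add: B_def)
  finally show ?thesis by (simp flip: of_int_mult)
qed

definition pascal_mat :: "nat \<Rightarrow> real mat" where
  "pascal_mat m = mat m m (\<lambda>(i, j). real (i choose j))"

lemma det_pascal_mat: "det (pascal_mat m) = 1"
  by (subst det_lower_triangular_prod[of _ m]) (auto simp: pascal_mat_def)

lemma pascal_mat_mult:
  "pascal_mat m * mat m m (\<lambda>(c, j). f c j + f (Suc c) j)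
     = mat m m (\<lambda>(i, j). \<Sum>k\<le>Suc m. real (Suc i choose k) * f k j)"
  by (rule eq_matI)
    (auto simp: pascal_mat_def scalar_prod_def atLeast0LessThan sum_binomial_Suc_eq
      simp del: sum.atMost_Suc)

definition binomial_toeplitz_mat :: "nat \<Rightarrow> nat \<Rightarrow> real mat" where
  "binomial_toeplitz_mat m q = mat m m (\<lambda>(i, j). if j \<le> i then real (q choose (i - j)) else 0)"

lemma det_binomial_toeplitz_mat: "det (binomial_toeplitz_mat m q) = 1"
  by (subst det_lower_triangular_prod[of _ m]) (auto simp: binomial_toeplitz_mat_def)

lemma binomial_toeplitz_mat_mult_pascal:
  "binomial_toeplitz_mat m q * transpose_mat (pascal_mat m)
     = mat m m (\<lambda>(i, j). real ((q + j) choose i))"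
proof (rule eq_matI)
  fix i j assume "i < dim_row (mat m m (\<lambda>(i, j). real ((q + j) choose i)))"
    "j < dim_col (mat m m (\<lambda>(i, j). real ((q + j) choose i)))"
  then have i: "i < m" and j: "j < m" by auto
  define g where "g e = (if e \<le> i then real (q choose (i - e)) else 0) * real (j choose e)" for e
  have "(\<Sum>e<m. g e) = (\<Sum>e\<le>min i j. g e)"
    by (rule sum.mono_neutral_right) (use j in \<open>auto simp: g_def binomial_eq_0\<close>)
  also have "\<dots> = (\<Sum>e\<le>i. g e)"
    by (rule sum.mono_neutral_left) (auto simp: g_def binomial_eq_0)
  also have "\<dots> = real ((q + j) choose i)"
    using vandermonde[of j q i]
    by (simp add: g_def add.commute mult.commute flip: of_nat_mult of_nat_sum)
  finally show "(binomial_toeplitz_mat m q * transpose_mat (pascal_mat m)) $$ (i, j)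
      = mat m m (\<lambda>(i, j). real ((q + j) choose i)) $$ (i, j)"
    using i j
    by (simp add: binomial_toeplitz_mat_def pascal_mat_def g_def scalar_prod_def atLeast0LessThan)
qed (auto simp: binomial_toeplitz_mat_def pascal_mat_def)

definition bidiag_last_row_mat :: "nat \<Rightarrow> 'a::comm_ring_1 \<Rightarrow> (nat \<Rightarrow> 'a) \<Rightarrow> 'a mat" where
  "bidiag_last_row_mat m s z = mat m m (\<lambda>(i, j).
     (if j = i then 1 else 0) + (if j = Suc i then s else 0) + (if i = m - 1 then s * z j else 0))"

lemma index_bidiag_last_row_mat_mult:
  fixes X :: "'a::comm_ring_1 mat"
  assumes X: "X \<in> carrier_mat m m" and i: "i < m" and j: "j < m"
  shows "(bidiag_last_row_mat m s z * X) $$ (i, j)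
       = X $$ (i, j) + (if Suc i < m then s * X $$ (Suc i, j) else 0)
         + (if i = m - 1 then s * (\<Sum>l<m. z l * X $$ (l, j)) else 0)"
proof -
  have "(bidiag_last_row_mat m s z * X) $$ (i, j)
      = (\<Sum>l<m. (if l = i then X $$ (l, j) else 0) + (if l = Suc i then s * X $$ (l, j) else 0)
          + (if i = m - 1 then s * (z l * X $$ (l, j)) else 0))"
    using X i j
    by (auto simp: bidiag_last_row_mat_def scalar_prod_def atLeast0LessThan algebra_simps
        intro!: sum.cong)
  also have "\<dots> = X $$ (i, j) + (if Suc i < m then s * X $$ (Suc i, j) else 0)
         + (if i = m - 1 then s * (\<Sum>l<m. z l * X $$ (l, j)) else 0)"
    using i by (simp add: sum.distrib sum.delta' sum_distrib_left)
  finally show ?thesis .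
qed

lemma bidiag_last_row_mat_mult:
  fixes g :: "nat \<Rightarrow> nat \<Rightarrow> 'a::comm_ring_1"
  assumes last_row: "\<And>j. j < m \<Longrightarrow> (\<Sum>l<m. z l * g l j) = g m j"
  shows "bidiag_last_row_mat m s z * mat m m (\<lambda>(i, j). g i j)
       = mat m m (\<lambda>(i, j). g i j + s * g (Suc i) j)"
proof (rule eq_matI)
  fix i j assume "i < dim_row (mat m m (\<lambda>(i, j). g i j + s * g (Suc i) j))"
    "j < dim_col (mat m m (\<lambda>(i, j). g i j + s * g (Suc i) j))"
  then have i: "i < m" and j: "j < m" by auto
  show "(bidiag_last_row_mat m s z * mat m m (\<lambda>(i, j). g i j)) $$ (i, j)
      = mat m m (\<lambda>(i, j). g i j + s * g (Suc i) j) $$ (i, j)"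
  proof (cases "Suc i < m")
    case True
    then show ?thesis using i j by (simp add: index_bidiag_last_row_mat_mult)
  next
    case False
    then have "i = m - 1" "Suc i = m" using i by auto
    then show ?thesis using i j last_row[OF j] by (simp add: index_bidiag_last_row_mat_mult)
  qed
qed (auto simp: bidiag_last_row_mat_def)

lemma det_bidiag_last_row_mat:
  "det (bidiag_last_row_mat m s z) = 1 + s * (\<Sum>l<m. z l * (-s) ^ (m - 1 - l))"
  (is "_ = ?d")
proof -
  define N where "N = bidiag_last_row_mat m s z"
  define W where "W = mat m m (\<lambda>(i, j). if i \<le> j then (-s) ^ (j - i) else 0)"
  have N: "N \<in> carrier_mat m m" and W: "W \<in> carrier_mat m m"
    by (simp_all add: N_def W_def bidiag_last_row_mat_def)
  have "det W = det (transpose_mat W)" by (rule det_transpose[OF W, symmetric])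
  also have "\<dots> = 1" by (subst det_lower_triangular_prod[of _ m]) (auto simp: W_def)
  finally have det_W: "det W = 1" .
  have above_diag: "(N * W) $$ (i, j) = 0" if "i < j" "j < m" for i j
  proof -
    have "j - i = Suc (j - Suc i)" using that by simp
    then show ?thesis using that W by (simp add: N_def index_bidiag_last_row_mat_mult W_def)
  qed
  have diag: "(N * W) $$ (i, i) = (if i = m - 1 then ?d else 1)" if "i < m" for i
  proof -
    have "(\<Sum>l<m. z l * W $$ (l, m - 1)) = (\<Sum>l<m. z l * (-s) ^ (m - 1 - l))"
      by (rule sum.cong) (auto simp: W_def)
    then show ?thesis using that W by (auto simp: N_def index_bidiag_last_row_mat_mult W_def)
  qed
  have "det N = det (N * W)" using det_mult[OF N W] det_W by simp
  also have "\<dots> = (\<Prod>i<m. (N * W) $$ (i, i))"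
    using N W above_diag by (intro det_lower_triangular_prod) auto
  also have "\<dots> = (\<Prod>i<m. if i = m - 1 then ?d else 1)"
    by (rule prod.cong) (simp_all add: diag)
  also have "\<dots> = ?d"
    by (cases m) (simp_all add: prod.lessThan_Suc)
  finally show ?thesis unfolding N_def .
qed

lemma det_binomial_product_mat:
  assumes "0 < q"
  shows "det (mat m m (\<lambda>(i, j). \<Sum>k\<le>Suc m. real (Suc i choose k) * real ((q + j) choose k) * s ^ k))
       = s ^ (m choose 2) * (\<Sum>k\<le>m. real ((q - 1 + k) choose k) * s ^ k)"
    (is "det ?A = _")
proof -
  define z where "z l = - ((- real q) gchoose (m - l))" for l
  define L where "L = pascal_mat m"
  define D where "D = mat_diag m (\<lambda>i. s ^ i)"
  define N where "N = bidiag_last_row_mat m s z"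
  define T where "T = binomial_toeplitz_mat m q"
  have carrier: "L \<in> carrier_mat m m" "D \<in> carrier_mat m m" "N \<in> carrier_mat m m"
    "T \<in> carrier_mat m m" "transpose_mat L \<in> carrier_mat m m"
    by (simp_all add: L_def D_def N_def T_def pascal_mat_def bidiag_last_row_mat_def
        binomial_toeplitz_mat_def)
  have "?A = L * mat m m (\<lambda>(i, j).
      real ((q + j) choose i) * s ^ i + real ((q + j) choose Suc i) * s ^ Suc i)"
    using pascal_mat_mult[of m "\<lambda>k j. real ((q + j) choose k) * s ^ k"]
    by (simp add: L_def mult.assoc del: sum.atMost_Suc power_Suc)
  also have "mat m m (\<lambda>(i, j).
      real ((q + j) choose i) * s ^ i + real ((q + j) choose Suc i) * s ^ Suc i)
      = D * mat m m (\<lambda>(i, j). real ((q + j) choose i) + s * real ((q + j) choose Suc i))"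
    unfolding D_def by (subst mat_diag_mult_left[of _ m m]) (auto simp: algebra_simps)
  also have "mat m m (\<lambda>(i, j). real ((q + j) choose i) + s * real ((q + j) choose Suc i))
      = N * mat m m (\<lambda>(i, j). real ((q + j) choose i))"
    unfolding N_def
    by (rule bidiag_last_row_mat_mult[symmetric])
      (use binomial_linear_recurrence in \<open>simp only: z_def\<close>)
  also have "mat m m (\<lambda>(i, j). real ((q + j) choose i)) = T * transpose_mat L"
    by (simp add: T_def L_def binomial_toeplitz_mat_mult_pascal)
  finally have "det ?A = det L * (det D * (det N * (det T * det (transpose_mat L))))"
    using carrier by (simp add: det_mult)
  also have "\<dots> = s ^ (m choose 2) * det N"
    using carrier(1)
    by (simp add: L_def D_def T_def det_pascal_mat det_binomial_toeplitz_mat det_mat_diag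
        det_transpose power_sum[symmetric] atLeast0LessThan[symmetric] Sum_Ico_nat choose_two)
  also have "det N = (\<Sum>k\<le>m. real ((q - 1 + k) choose k) * s ^ k)"
    unfolding N_def det_bidiag_last_row_mat z_def by (rule neg_binomial_partial_sum[OF assms])
  finally show ?thesis .
qed

lemma det_Pmat:
  assumes "p < n"
  shows "det (Pmat n p s)
       = s ^ ((p - 1) choose 2) * (\<Sum>k = 0..p - 1. real ((n - p - 1 + k) choose k) * s ^ k)"
proof -
  define m where "m = p - 1"
  define A where "A = mat m m (\<lambda>(i, j).
    \<Sum>k\<le>Suc m. real (Suc i choose k) * real ((n - p + j) choose k) * s ^ k)"
  define r where "r = (\<lambda>i. if i < m then m - 1 - i else i)"
  have "Pmat n p s = mat m m (\<lambda>(i, j). A $$ (r i, r j))"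
  proof (rule eq_matI)
    fix i j assume "i < dim_row (mat m m (\<lambda>(i, j). A $$ (r i, r j)))"
      "j < dim_col (mat m m (\<lambda>(i, j). A $$ (r i, r j)))"
    then have i: "i < m" and j: "j < m" by auto
    then have "Suc m = p" "p - (i + 1) = Suc (r i)" "n - 1 - (j + 1) = n - p + r j"
      using assms by (auto simp: m_def r_def)
    then show "Pmat n p s $$ (i, j) = mat m m (\<lambda>(i, j). A $$ (r i, r j)) $$ (i, j)"
      using i j by (simp add: Pmat_def A_def m_def r_def)
  qed (simp_all add: Pmat_def m_def)
  moreover have "A \<in> carrier_mat m m" by (simp add: A_def)
  moreover have "r permutes {0..<m}" unfolding r_def by (rule permutes_reverse)
  ultimately have "det (Pmat n p s) = det A" by (simp add: det_permute_rows_cols)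
  also have "\<dots> = s ^ (m choose 2) * (\<Sum>k\<le>m. real ((n - p - 1 + k) choose k) * s ^ k)"
    unfolding A_def by (rule det_binomial_product_mat) (use assms in simp)
  finally show ?thesis by (simp add: m_def atMost_atLeast0)
qed

theorem corollary1:
  fixes n p d :: nat and t :: real
  assumes "0 < n" and "0 < p" and "0 < d" and "n > p"
    and "t \<noteq> 0" and "t \<noteq> 1"
  shows "det (Pmat n p (t ^ (d - 1))) / t ^ ((d - 1) * ((p - 1) choose 2))
           * ((1 - t ^ d) ^ p * (1 - t ^ (d - 1)) ^ (n - p) / (1 - t) ^ n)
         = (\<Sum>k = 0..p - 1. real ((n - p - 1 + k) choose k) * t ^ (k * (d - 1)))
           * ((1 - t ^ d) ^ p * (1 - t ^ (d - 1)) ^ (n - p) / (1 - t) ^ n)"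
proof -
  have "(t ^ (d - 1)) ^ k = t ^ (k * (d - 1))" for k
    by (simp add: power_mult[symmetric] mult.commute)
  then have "det (Pmat n p (t ^ (d - 1)))
      = t ^ ((d - 1) * ((p - 1) choose 2))
        * (\<Sum>k = 0..p - 1. real ((n - p - 1 + k) choose k) * t ^ (k * (d - 1)))"
    using det_Pmat[OF \<open>n > p\<close>, of "t ^ (d - 1)"] by (simp add: power_mult)
  then show ?thesis using \<open>t \<noteq> 0\<close> by simp
qed

end
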